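(* Let $\mathcal{M}=\langle W^{\mathcal{M}},\sim^{\mathcal{M}},L^{\mathcal{M}}\rangle$ be a partial epistemic model and $\mathbf{A}=\langle T,\sim^{\mathbf{A}},\mathsf{pre}\rangle$ an action model, both having proper partial epistemic frames. Then the partial product update $\mathcal{M}[\![\mathbf{A}]\!]$ is a partial epistemic model (in particular its relations $\sim_a$ are well defined, independent of the representative $X$ chosen in a world $(\langle X\rangle_t,t)$). In particular, if both $\mathcal{M}$ and $\mathbf{A}$ are proper, so is $\mathcal{M}[\![\mathbf{A}]\!]$.
   Context: Fix agents $\mathsf{Ag}=\{0,\dots,n-1\}$, $n>1$, and a set of atomic propositions $\mathsf{At}=\bigcup_{a\in\mathsf{Ag}}\mathsf{At}_a$ (disjoint union). Epistemic formulas are generated by $\varphi::=p\mid\neg\varphi\mid\varphi\wedge\varphi\mid\varphi\vee\varphi\mid K_a\varphi$ ($p\in\mathsf{At}$, $a\in\mathsf{Ag}$). A partial epistemic frame $\langle W,\sim\rangle$ consists of a nonempty finite set $W$ and, for each $a\in\mathsf{Ag}$, a partial equivalence relation $\sim_a$ on $W$ (symmetric and transitive, not necessarily reflexive). A partial epistemic model $\langle W,\sim,L\rangle$ adds a labeling $L:W\to\mathcal{P}(\mathsf{At})$. For a world $w$, $\mathrm{Alive}(w)=\{a\in\mathsf{Ag}\mid w\sim_a w\}$; for $A\subseteq\mathsf{Ag}$, $w\sim_A w'$ means $w\sim_a w'$ for all $a\in A$. A frame/model is proper if for all $w\neq w'$ there is $a$ with $w\not\sim_a w'$. Satisfaction: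 $\mathcal{M},w\models p$ iff $p\in L(w)$; Boolean connectives as usual; $\mathcal{M},w\models K_a\varphi$ iff $\mathcal{M},w'\models\varphi$ for all $w'$ with $w\sim_a w'$. An action model $\langle T,\sim^{\mathbf{A}},\mathsf{pre}\rangle$ is a partial epistemic frame $\langle T,\sim^{\mathbf{A}}\rangle$ (elements called actions) together with a map $\mathsf{pre}$ assigning an epistemic formula to each action; $\mathrm{Alive}(t)=\{a\mid t\sim^{\mathbf{A}}_a t\}$. Partial product update: for $t\in T$ and $X\in W^{\mathcal{M}}$ let $\langle X\rangle_t=\{Y\in W^{\mathcal{M}}\mid X\sim^{\mathcal{M}}_{\mathrm{Alive}(t)}Y \text{ and } \mathcal{M},Y\models\mathsf{pre}(t)\}$. Then $\mathcal{M}[\![\mathbf{A}]\!]=\langle W,\sim,L\rangle$ where $W=\{(\langle X\rangle_t,t)\mid X\in W^{\mathcal{M}},t\in T,\mathrm{Alive}(t)\subseteq\mathrm{Alive}(X),\mathcal{M},X\models\mathsf{pre}(t)\}$, $(\langle X\rangle_t,t)\sim_a(\langle Y\rangle_s,s)$ iff $X\sim^{\mathcal{M}}_aY$ and $t\sim^{\mathbf{A}}_a s$, and $L((\langle X\rangle_t,t))=\bigcap_{X'\in\langle X\rangle_t}L^{\mathcal{M}}(X')$. *)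

theory Defs
  imports Main
begin

text \<open>Agents are the natural numbers below n (Ag = {0..<n}); atomic propositions
are the elements of the type 'p.\<close>

datatype 'p fm = Atom 'p | Neg "'p fm" | Conj "'p fm" "'p fm" | Disj "'p fm" "'p fm"
  | Kn nat "'p fm"

fun wf_fm :: "nat \<Rightarrow> 'p fm \<Rightarrow> bool" where
  "wf_fm n (Atom p) = True"
| "wf_fm n (Neg f) = wf_fm n f"
| "wf_fm n (Conj f g) = (wf_fm n f \<and> wf_fm n g)"
| "wf_fm n (Disj f g) = (wf_fm n f \<and> wf_fm n g)"
| "wf_fm n (Kn a f) = (a < n \<and> wf_fm n f)"

fun sat :: "(nat \<Rightarrow> ('w \<times> 'w) set) \<Rightarrow> ('w \<Rightarrow> 'p set) \<Rightarrow> 'w \<Rightarrow> 'p fm \<Rightarrow> bool" where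
  "sat R L w (Atom p) = (p \<in> L w)"
| "sat R L w (Neg f) = (\<not> sat R L w f)"
| "sat R L w (Conj f g) = (sat R L w f \<and> sat R L w g)"
| "sat R L w (Disj f g) = (sat R L w f \<or> sat R L w g)"
| "sat R L w (Kn a f) = (\<forall>w'. (w, w') \<in> R a \<longrightarrow> sat R L w' f)"

definition pe_frame :: "nat \<Rightarrow> 'w set \<Rightarrow> (nat \<Rightarrow> ('w \<times> 'w) set) \<Rightarrow> bool" where
  "pe_frame n W R \<longleftrightarrow> finite W \<and> W \<noteq> {} \<and>
     (\<forall>a<n. R a \<subseteq> W \<times> W \<and> sym (R a) \<and> trans (R a))"

definition pe_model :: "nat \<Rightarrow> 'w set \<Rightarrow> (nat \<Rightarrow> ('w \<times> 'w) set) \<Rightarrow> ('w \<Rightarrow> 'p set) \<Rightarrow> bool" where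
  "pe_model n W R L \<longleftrightarrow> pe_frame n W R"

definition proper :: "nat \<Rightarrow> 'w set \<Rightarrow> (nat \<Rightarrow> ('w \<times> 'w) set) \<Rightarrow> bool" where
  "proper n W R \<longleftrightarrow> (\<forall>w\<in>W. \<forall>w'\<in>W. w \<noteq> w' \<longrightarrow> (\<exists>a<n. (w, w') \<notin> R a))"

definition action_model :: "nat \<Rightarrow> 't set \<Rightarrow> (nat \<Rightarrow> ('t \<times> 't) set) \<Rightarrow> ('t \<Rightarrow> 'p fm) \<Rightarrow> bool" where
  "action_model n T S pre \<longleftrightarrow> pe_frame n T S \<and> (\<forall>t\<in>T. wf_fm n (pre t))"

definition alive :: "nat \<Rightarrow> (nat \<Rightarrow> ('w \<times> 'w) set) \<Rightarrow> 'w \<Rightarrow> nat set" where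
  "alive n R w = {a. a < n \<and> (w, w) \<in> R a}"

definition simA :: "(nat \<Rightarrow> ('w \<times> 'w) set) \<Rightarrow> nat set \<Rightarrow> 'w \<Rightarrow> 'w \<Rightarrow> bool" where
  "simA R A X Y \<longleftrightarrow> (\<forall>a\<in>A. (X, Y) \<in> R a)"

definition gen :: "nat \<Rightarrow> 'w set \<Rightarrow> (nat \<Rightarrow> ('w \<times> 'w) set) \<Rightarrow> ('w \<Rightarrow> 'p set)
    \<Rightarrow> (nat \<Rightarrow> ('t \<times> 't) set) \<Rightarrow> ('t \<Rightarrow> 'p fm) \<Rightarrow> 'w \<Rightarrow> 't \<Rightarrow> 'w set" where
  "gen n W R L S pre X t = {Y \<in> W. simA R (alive n S t) X Y \<and> sat R L Y (pre t)}"

definition valid_rep :: "nat \<Rightarrow> 'w set \<Rightarrow> (nat \<Rightarrow> ('w \<times> 'w) set) \<Rightarrow> ('w \<Rightarrow> 'p set)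
    \<Rightarrow> 't set \<Rightarrow> (nat \<Rightarrow> ('t \<times> 't) set) \<Rightarrow> ('t \<Rightarrow> 'p fm) \<Rightarrow> 'w \<Rightarrow> 't \<Rightarrow> bool" where
  "valid_rep n W R L T S pre X t \<longleftrightarrow>
     X \<in> W \<and> t \<in> T \<and> alive n S t \<subseteq> alive n R X \<and> sat R L X (pre t)"

definition upd_W :: "nat \<Rightarrow> 'w set \<Rightarrow> (nat \<Rightarrow> ('w \<times> 'w) set) \<Rightarrow> ('w \<Rightarrow> 'p set)
    \<Rightarrow> 't set \<Rightarrow> (nat \<Rightarrow> ('t \<times> 't) set) \<Rightarrow> ('t \<Rightarrow> 'p fm) \<Rightarrow> ('w set \<times> 't) set" where
  "upd_W n W R L T S pre =
     {(gen n W R L S pre X t, t) | X t. valid_rep n W R L T S pre X t}"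

definition upd_R :: "nat \<Rightarrow> 'w set \<Rightarrow> (nat \<Rightarrow> ('w \<times> 'w) set) \<Rightarrow> ('w \<Rightarrow> 'p set)
    \<Rightarrow> 't set \<Rightarrow> (nat \<Rightarrow> ('t \<times> 't) set) \<Rightarrow> ('t \<Rightarrow> 'p fm) \<Rightarrow> nat
    \<Rightarrow> (('w set \<times> 't) \<times> ('w set \<times> 't)) set" where
  "upd_R n W R L T S pre a =
     {((gen n W R L S pre X t, t), (gen n W R L S pre Y s, s)) | X t Y s.
        valid_rep n W R L T S pre X t \<and> valid_rep n W R L T S pre Y s \<and>
        (X, Y) \<in> R a \<and> (t, s) \<in> S a}"

definition upd_L :: "('w \<Rightarrow> 'p set) \<Rightarrow> ('w set \<times> 't) \<Rightarrow> 'p set" where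
  "upd_L L w = (\<Inter>X'\<in>fst w. L X')"

definition upd_well_defined :: "nat \<Rightarrow> 'w set \<Rightarrow> (nat \<Rightarrow> ('w \<times> 'w) set) \<Rightarrow> ('w \<Rightarrow> 'p set)
    \<Rightarrow> 't set \<Rightarrow> (nat \<Rightarrow> ('t \<times> 't) set) \<Rightarrow> ('t \<Rightarrow> 'p fm) \<Rightarrow> bool" where
  "upd_well_defined n W R L T S pre \<longleftrightarrow>
     (\<forall>a<n. \<forall>X X' t Y Y' s.
        valid_rep n W R L T S pre X t \<and> valid_rep n W R L T S pre X' t \<and>
        gen n W R L S pre X t = gen n W R L S pre X' t \<and>
        valid_rep n W R L T S pre Y s \<and> valid_rep n W R L T S pre Y' s \<and>
        gen n W R L S pre Y s = gen n W R L S pre Y' s \<longrightarrow>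
        (((X, Y) \<in> R a \<and> (t, s) \<in> S a) \<longleftrightarrow> ((X', Y') \<in> R a \<and> (t, s) \<in> S a)))"

end

theory Submission
  imports Defs
begin

text \<open>A representative X of a world (<X>_t, t) lies in its own cell <X>_t, so any other
  representative X' of the same cell is a-related to X for every agent a alive at t.
  Since every agent relating t to an action s is alive at both t and s, transitivity lets one
  move between representatives on both sides of (<X>_t, t) ~_a (<Y>_s, s); so the relations
  of the update are well defined, and they inherit symmetry and transitivity. If all agents
  relate two worlds of the update, then all agents relate their representatives and their
  actions, and properness of the model and of the action model identifies them.\<close>

lemma sym_trans_refl_left:
  assumes "sym r" "trans r" "(x, y) \<in> r"
  shows "(x, x) \<in> r"
  using assms by (meson symD transD)

lemma mem_gen_self:
  assumes "valid_rep n W R L T S pre X t"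
  shows "X \<in> gen n W R L S pre X t"
  using assms unfolding valid_rep_def gen_def simA_def alive_def by auto

lemma gen_eq_imp_rel:
  assumes "valid_rep n W R L T S pre X t"
    and "gen n W R L S pre X t = gen n W R L S pre X' t"
    and "a \<in> alive n S t"
  shows "(X', X) \<in> R a"
  using mem_gen_self[OF assms(1)] assms(2,3) unfolding gen_def simA_def by auto

lemma upd_W_cases:
  assumes "u \<in> upd_W n W R L T S pre"
  obtains X t where "valid_rep n W R L T S pre X t" and "u = (gen n W R L S pre X t, t)"
  using assms unfolding upd_W_def by blast

lemma upd_R_subset_upd_W:
  "upd_R n W R L T S pre a \<subseteq> upd_W n W R L T S pre \<times> upd_W n W R L T S pre"
  unfolding upd_R_def upd_W_def by blast

lemma finite_upd_W:
  assumes "finite W" "finite T"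
  shows "finite (upd_W n W R L T S pre)"
proof -
  have "upd_W n W R L T S pre \<subseteq> (\<lambda>(X, t). (gen n W R L S pre X t, t)) ` (W \<times> T)"
    unfolding upd_W_def valid_rep_def by auto
  then show ?thesis using assms by (meson finite_SigmaI finite_imageI finite_subset)
qed

locale partial_product_update =
  fixes n :: nat
    and W :: "'w set" and R :: "nat \<Rightarrow> ('w \<times> 'w) set" and L :: "'w \<Rightarrow> 'p set"
    and T :: "'t set" and S :: "nat \<Rightarrow> ('t \<times> 't) set" and pre :: "'t \<Rightarrow> 'p fm"
  assumes model_frame: "pe_frame n W R"
    and action_frame: "pe_frame n T S"
begin

abbreviation rep :: "'w \<Rightarrow> 't \<Rightarrow> bool" where
  "rep \<equiv> valid_rep n W R L T S pre"

abbreviation cell :: "'w \<Rightarrow> 't \<Rightarrow> 'w set" where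
  "cell \<equiv> gen n W R L S pre"

lemma sym_R: "a < n \<Longrightarrow> sym (R a)"
  and trans_R: "a < n \<Longrightarrow> trans (R a)"
  and sym_S: "a < n \<Longrightarrow> sym (S a)"
  and trans_S: "a < n \<Longrightarrow> trans (S a)"
  using model_frame action_frame unfolding pe_frame_def by auto

lemma action_rel_imp_alive:
  assumes "a < n" "(t, s) \<in> S a"
  shows "a \<in> alive n S t" "a \<in> alive n S s"
proof -
  have "(s, t) \<in> S a" using assms sym_S by (meson symD)
  then have "(t, t) \<in> S a" "(s, s) \<in> S a"
    using assms sym_trans_refl_left[OF sym_S trans_S] by blast+
  then show "a \<in> alive n S t" "a \<in> alive n S s"
    using assms(1) unfolding alive_def by simp_all
qed

lemma upd_R_iff:
  assumes "a < n" "rep X t" "rep Y s"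
  shows "((cell X t, t), (cell Y s, s)) \<in> upd_R n W R L T S pre a
    \<longleftrightarrow> (X, Y) \<in> R a \<and> (t, s) \<in> S a"
proof
  assume "((cell X t, t), (cell Y s, s)) \<in> upd_R n W R L T S pre a"
  then obtain X' Y' where X': "rep X' t" "cell X' t = cell X t"
    and Y': "rep Y' s" "cell Y' s = cell Y s"
    and rel: "(X', Y') \<in> R a" and ts: "(t, s) \<in> S a"
    unfolding upd_R_def by auto
  have "(X, X') \<in> R a" using gen_eq_imp_rel[OF X'] action_rel_imp_alive(1)[OF assms(1) ts] .
  moreover have "(Y', Y) \<in> R a"
    using gen_eq_imp_rel[OF assms(3) Y'(2)[symmetric]] action_rel_imp_alive(2)[OF assms(1) ts] .
  ultimately show "(X, Y) \<in> R a \<and> (t, s) \<in> S a"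
    using rel ts trans_R[OF assms(1)] by (meson transD)
next
  assume "(X, Y) \<in> R a \<and> (t, s) \<in> S a"
  then show "((cell X t, t), (cell Y s, s)) \<in> upd_R n W R L T S pre a"
    using assms unfolding upd_R_def by blast
qed

lemma upd_well_defined: "upd_well_defined n W R L T S pre"
  unfolding upd_well_defined_def
proof (intro allI impI, elim conjE)
  fix a X X' t Y Y' s
  assume a: "a < n" and reps: "rep X t" "rep X' t" "rep Y s" "rep Y' s"
    and cells: "cell X t = cell X' t" "cell Y s = cell Y' s"
  have "(X, Y) \<in> R a \<and> (t, s) \<in> S a
      \<longleftrightarrow> ((cell X t, t), (cell Y s, s)) \<in> upd_R n W R L T S pre a"
    using upd_R_iff[OF a reps(1,3)] by simp
  also have "\<dots> \<longleftrightarrow> (X', Y') \<in> R a \<and> (t, s) \<in> S a"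
    unfolding cells using upd_R_iff[OF a reps(2,4)] .
  finally show "(X, Y) \<in> R a \<and> (t, s) \<in> S a \<longleftrightarrow> (X', Y') \<in> R a \<and> (t, s) \<in> S a" .
qed

lemma sym_upd_R:
  assumes "a < n"
  shows "sym (upd_R n W R L T S pre a)"
  using sym_R[OF assms] sym_S[OF assms] unfolding sym_def upd_R_def by blast

lemma trans_upd_R:
  assumes a: "a < n"
  shows "trans (upd_R n W R L T S pre a)"
proof (rule transI)
  fix u v w
  assume uv: "(u, v) \<in> upd_R n W R L T S pre a" and vw: "(v, w) \<in> upd_R n W R L T S pre a"
  then have "u \<in> upd_W n W R L T S pre" "v \<in> upd_W n W R L T S pre"
    "w \<in> upd_W n W R L T S pre"
    using upd_R_subset_upd_W by blast+
  then obtain X t Y s Z r where u: "u = (cell X t, t)" and v: "v = (cell Y s, s)"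
    and w: "w = (cell Z r, r)" and reps: "rep X t" "rep Y s" "rep Z r"
    by (elim upd_W_cases)
  have "(X, Y) \<in> R a" "(t, s) \<in> S a" "(Y, Z) \<in> R a" "(s, r) \<in> S a"
    using uv vw upd_R_iff[OF a reps(1,2)] upd_R_iff[OF a reps(2,3)] unfolding u v w by simp_all
  then have "(X, Z) \<in> R a" "(t, r) \<in> S a"
    using trans_R[OF a] trans_S[OF a] by (meson transD)+
  then show "(u, w) \<in> upd_R n W R L T S pre a"
    using upd_R_iff[OF a reps(1,3)] unfolding u w by simp
qed

lemma pe_frame_upd:
  assumes "upd_W n W R L T S pre \<noteq> {}"
  shows "pe_frame n (upd_W n W R L T S pre) (upd_R n W R L T S pre)"
proof -
  have "finite W" "finite T" using model_frame action_frame unfolding pe_frame_def by simp_all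
  then show ?thesis
    using assms unfolding pe_frame_def
    by (simp add: finite_upd_W upd_R_subset_upd_W sym_upd_R trans_upd_R)
qed

lemma proper_upd:
  assumes "proper n W R" "proper n T S"
  shows "proper n (upd_W n W R L T S pre) (upd_R n W R L T S pre)"
  unfolding proper_def
proof (intro ballI impI)
  fix u w assume "u \<in> upd_W n W R L T S pre" "w \<in> upd_W n W R L T S pre" "u \<noteq> w"
  then obtain X t Y s where u: "u = (cell X t, t)" and w: "w = (cell Y s, s)"
    and reps: "rep X t" "rep Y s"
    by (elim upd_W_cases)
  with \<open>u \<noteq> w\<close> have "X \<noteq> Y \<or> t \<noteq> s" by auto
  then obtain a where a: "a < n" and "(X, Y) \<notin> R a \<or> (t, s) \<notin> S a"
    using assms reps unfolding proper_def valid_rep_def by blast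
  then have "(u, w) \<notin> upd_R n W R L T S pre a"
    using upd_R_iff[OF a reps] unfolding u w by simp
  with a show "\<exists>a<n. (u, w) \<notin> upd_R n W R L T S pre a" by blast
qed

end

theorem proposition3p3:
  fixes n :: nat
    and W :: "'w set" and R :: "nat \<Rightarrow> ('w \<times> 'w) set" and L :: "'w \<Rightarrow> 'p set"
    and T :: "'t set" and S :: "nat \<Rightarrow> ('t \<times> 't) set" and pre :: "'t \<Rightarrow> 'p fm"
  assumes "n > 1"
    and "pe_model n W R L" and "proper n W R"
    and "action_model n T S pre" and "proper n T S"
  shows "upd_well_defined n W R L T S pre
    \<and> (upd_W n W R L T S pre \<noteq> {} \<longrightarrow>
         pe_model n (upd_W n W R L T S pre) (upd_R n W R L T S pre) (upd_L L))
    \<and> proper n (upd_W n W R L T S pre) (upd_R n W R L T S pre)"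
proof -
  interpret partial_product_update n W R L T S pre
    using assms(2,4) by unfold_locales (simp_all add: pe_model_def action_model_def)
  show ?thesis
    using upd_well_defined pe_frame_upd proper_upd[OF assms(3,5)] by (simp add: pe_model_def)
qed

end
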